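(* Let $K,H\le\mathbb{H}^\times$ be finite with $[K,K]\le H\trianglelefteq K$ and $H\ne\{1\}$, and let $n\ge3$. Then the poset $\mathcal{P}(G_n(K,H))$ of parabolic subgroups of $G_n(K,H)$ (ordered by inclusion), and hence the intersection lattice $L(\mathcal{A}(G_n(K,H)))$ (ordered by reverse inclusion), is isomorphic to the Dowling lattice $\mathcal{D}_n(K)$.
   Context: $\mathbb{H}$: quaternions. $A_n(K,H)$: diagonal matrices $\mathrm{diag}(k_1,\dots,k_n)$, $k_i\in K$, $k_1\cdots k_n\in H$; $G_n(K,H)$: group generated by $A_n(K,H)$ and permutation matrices, acting on $\mathbb{H}^n$ by left multiplication; it is a quaternionic reflection group (generated by finite-order $g$ with $\mathrm{rk}(1-g)=1$), $\mathcal{A}(G)$ is the set of fixed hyperplanes of its reflections, and $L(\mathcal{A})$ the set of intersections of subsets of $\mathcal{A}$. A parabolic subgroup is the pointwise stabilizer of a subset of $\mathbb{H}^n$. Dowling lattice $\mathcal{D}_n(K)$: its elements are partial $K$-partitions of $\{1,\dots,n\}$, i.e. sets $\{(B_1,[\xi_1]),\dots,(B_d,[\xi_d])\}$ where $B_1,\dots,B_d$ are pairwise disjoint nonempty subsets of $\{1,\dots,n\}$ (not necessarily covering it) and $[\xi_j]$ is the class of a function $\xi_j:B_j\to K$ modulo $\xi_j\sim g\xi_j$ ($g\in K$ constant, left multiplication). The order is: $\pi\le\pi'$ iff every block $(B',[\xi'])$ of $\pi'$ satisfies $B'=B_{i_1}\cup\dots\cup B_{i_p}$ for some blocks $(B_{i_r},[\xi_{i_r}])$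 of $\pi$ with $\xi'|_{B_{i_r}}\in K\cdot\xi_{i_r}$ for each $r$. *)

theory Defs
  imports Complex_Main "HOL-Combinatorics.Permutations"
begin

datatype quat = Quat (qre: real) (qi: real) (qj: real) (qk: real)

instantiation quat :: ring_1
begin
definition "0 = Quat 0 0 0 0"
definition "1 = Quat 1 0 0 0"
definition "x + y = Quat (qre x + qre y) (qi x + qi y) (qj x + qj y) (qk x + qk y)"
definition "x - y = Quat (qre x - qre y) (qi x - qi y) (qj x - qj y) (qk x - qk y)"
definition "- x = Quat (- qre x) (- qi x) (- qj x) (- qk x)"
definition "x * y = Quat
   (qre x * qre y - qi x * qi y - qj x * qj y - qk x * qk y)
   (qre x * qi y + qi x * qre y + qj x * qk y - qk x * qj y)
   (qre x * qj y - qi x * qk y + qj x * qre y + qk x * qi y)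
   (qre x * qk y + qi x * qj y - qj x * qi y + qk x * qre y)"
instance
  by standard (simp_all add: zero_quat_def one_quat_def plus_quat_def minus_quat_def
      uminus_quat_def times_quat_def quat.expand algebra_simps)
end

definition qconj :: "quat \<Rightarrow> quat" where
  "qconj x = Quat (qre x) (- qi x) (- qj x) (- qk x)"
definition qnsq :: "quat \<Rightarrow> real" where
  "qnsq x = (qre x)\<^sup>2 + (qi x)\<^sup>2 + (qj x)\<^sup>2 + (qk x)\<^sup>2"
definition qscale :: "real \<Rightarrow> quat \<Rightarrow> quat" where
  "qscale c x = Quat (c * qre x) (c * qi x) (c * qj x) (c * qk x)"

lemma qconj_mult: "qconj x * x = Quat (qnsq x) 0 0 0" "x * qconj x = Quat (qnsq x) 0 0 0"
  by (simp_all add: qconj_def qnsq_def times_quat_def power2_eq_square algebra_simps)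
lemma qscale_mult: "qscale c x * y = qscale c (x * y)" "x * qscale c y = qscale c (x * y)"
  by (simp_all add: qscale_def times_quat_def algebra_simps)
lemma qnsq_nz: "x \<noteq> 0 \<Longrightarrow> qnsq x \<noteq> 0"
  by (cases x) (simp add: qnsq_def zero_quat_def add_nonneg_eq_0_iff)

instantiation quat :: division_ring
begin
definition "inverse x = qscale (1 / qnsq x) (qconj x)"
definition "x div (y::quat) = x * inverse y"
instance
proof
  fix a :: quat
  assume "a \<noteq> 0"
  then have r: "qnsq a \<noteq> 0" by (rule qnsq_nz)
  show "inverse a * a = 1" "a * inverse a = 1"
    using r by (simp_all only: inverse_quat_def qscale_mult qconj_mult; simp add: qscale_def one_quat_def)+
next
  show "inverse (0::quat) = 0"
    by (simp add: inverse_quat_def zero_quat_def qscale_def qnsq_def)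
next
  fix a b :: quat show "a div b = a * inverse b" by (simp add: divide_quat_def)
qed
end

text \<open>Vectors in H^n are functions nat => quat vanishing outside {0..<n};
  matrices are functions nat => nat => quat vanishing outside {0..<n} x {0..<n}.\<close>

definition qvecs :: "nat \<Rightarrow> (nat \<Rightarrow> quat) set" where
  "qvecs n = {v. \<forall>i. n \<le> i \<longrightarrow> v i = 0}"

definition mmul :: "nat \<Rightarrow> (nat \<Rightarrow> nat \<Rightarrow> quat) \<Rightarrow> (nat \<Rightarrow> nat \<Rightarrow> quat) \<Rightarrow> (nat \<Rightarrow> nat \<Rightarrow> quat)" where
  "mmul n A B = (\<lambda>i j. if i < n \<and> j < n then (\<Sum>k<n. A i k * B k j) else 0)"

definition idm :: "nat \<Rightarrow> (nat \<Rightarrow> nat \<Rightarrow> quat)" where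
  "idm n = (\<lambda>i j. if i < n \<and> i = j then 1 else 0)"

definition minv :: "nat \<Rightarrow> (nat \<Rightarrow> nat \<Rightarrow> quat) \<Rightarrow> (nat \<Rightarrow> nat \<Rightarrow> quat)" where
  "minv n A = (SOME B. mmul n A B = idm n \<and> mmul n B A = idm n)"

definition mpow :: "nat \<Rightarrow> (nat \<Rightarrow> nat \<Rightarrow> quat) \<Rightarrow> nat \<Rightarrow> (nat \<Rightarrow> nat \<Rightarrow> quat)" where
  "mpow n A m = ((mmul n A) ^^ m) (idm n)"

definition mvec :: "nat \<Rightarrow> (nat \<Rightarrow> nat \<Rightarrow> quat) \<Rightarrow> (nat \<Rightarrow> quat) \<Rightarrow> (nat \<Rightarrow> quat)" where
  "mvec n A v = (\<lambda>i. if i < n then (\<Sum>j<n. A i j * v j) else 0)"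

definition diagm :: "nat \<Rightarrow> (nat \<Rightarrow> quat) \<Rightarrow> (nat \<Rightarrow> nat \<Rightarrow> quat)" where
  "diagm n d = (\<lambda>i j. if i < n \<and> i = j then d i else 0)"

definition permm :: "nat \<Rightarrow> (nat \<Rightarrow> nat) \<Rightarrow> (nat \<Rightarrow> nat \<Rightarrow> quat)" where
  "permm n p = (\<lambda>i j. if i < n \<and> j < n \<and> i = p j then 1 else 0)"

inductive_set gen_group :: "nat \<Rightarrow> (nat \<Rightarrow> nat \<Rightarrow> quat) set \<Rightarrow> (nat \<Rightarrow> nat \<Rightarrow> quat) set"
  for n S where
  gen_id: "idm n \<in> gen_group n S"
| gen_mul: "a \<in> S \<Longrightarrow> g \<in> gen_group n S \<Longrightarrow> mmul n a g \<in> gen_group n S"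
| gen_inv: "a \<in> S \<Longrightarrow> g \<in> gen_group n S \<Longrightarrow> mmul n (minv n a) g \<in> gen_group n S"

text \<open>Finite subgroup of the unit group of the quaternions (finiteness stated separately).\<close>
definition quat_subgroup :: "quat set \<Rightarrow> bool" where
  "quat_subgroup S \<longleftrightarrow> 0 \<notin> S \<and> 1 \<in> S \<and> (\<forall>a\<in>S. \<forall>b\<in>S. a * b \<in> S) \<and> (\<forall>a\<in>S. inverse a \<in> S)"

definition An :: "nat \<Rightarrow> quat set \<Rightarrow> quat set \<Rightarrow> (nat \<Rightarrow> nat \<Rightarrow> quat) set" where
  "An n K H = {diagm n d | d. (\<forall>i<n. d i \<in> K) \<and> prod_list (map d [0..<n]) \<in> H}"

definition Gn :: "nat \<Rightarrow> quat set \<Rightarrow> quat set \<Rightarrow> (nat \<Rightarrow> nat \<Rightarrow> quat) set" where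
  "Gn n K H = gen_group n (An n K H \<union> {permm n p | p. p permutes {..<n}})"

definition pointwise_stab :: "nat \<Rightarrow> (nat \<Rightarrow> nat \<Rightarrow> quat) set \<Rightarrow> (nat \<Rightarrow> quat) set \<Rightarrow> (nat \<Rightarrow> nat \<Rightarrow> quat) set" where
  "pointwise_stab n G X = {g \<in> G. \<forall>x\<in>X. mvec n g x = x}"

definition parabolics :: "nat \<Rightarrow> (nat \<Rightarrow> nat \<Rightarrow> quat) set \<Rightarrow> (nat \<Rightarrow> nat \<Rightarrow> quat) set set" where
  "parabolics n G = {pointwise_stab n G X | X. X \<subseteq> qvecs n}"

text \<open>rk(1-g) = 1: the image of v |-> v - g v on H^n is a one-dimensional
  (right) quaternionic subspace w H with w nonzero.\<close>
definition is_reflection :: "nat \<Rightarrow> (nat \<Rightarrow> nat \<Rightarrow> quat) set \<Rightarrow> (nat \<Rightarrow> nat \<Rightarrow> quat) \<Rightarrow> bool" where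
  "is_reflection n G g \<longleftrightarrow> g \<in> G \<and> (\<exists>m>0. mpow n g m = idm n) \<and>
     (\<exists>w\<in>qvecs n. w \<noteq> (\<lambda>_. 0) \<and>
        (\<lambda>v. (\<lambda>i. v i - mvec n g v i)) ` qvecs n = {(\<lambda>i. w i * q) | q. True})"

definition fixspace :: "nat \<Rightarrow> (nat \<Rightarrow> nat \<Rightarrow> quat) \<Rightarrow> (nat \<Rightarrow> quat) set" where
  "fixspace n g = {v \<in> qvecs n. mvec n g v = v}"

definition arrangement :: "nat \<Rightarrow> (nat \<Rightarrow> nat \<Rightarrow> quat) set \<Rightarrow> (nat \<Rightarrow> quat) set set" where
  "arrangement n G = {fixspace n g | g. is_reflection n G g}"

text \<open>Intersections of subsets of the arrangement (the empty intersection is H^n).\<close>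
definition intersection_lattice :: "nat \<Rightarrow> (nat \<Rightarrow> nat \<Rightarrow> quat) set \<Rightarrow> (nat \<Rightarrow> quat) set set" where
  "intersection_lattice n G = {qvecs n \<inter> \<Inter>S | S. S \<subseteq> arrangement n G}"

text \<open>A function xi : B -> K is represented as nat => quat with values in K on B, 0 off B.\<close>
definition kfuns :: "quat set \<Rightarrow> nat set \<Rightarrow> (nat \<Rightarrow> quat) set" where
  "kfuns K B = {\<xi>. (\<forall>i\<in>B. \<xi> i \<in> K) \<and> (\<forall>i. i \<notin> B \<longrightarrow> \<xi> i = 0)}"

definition kclass :: "quat set \<Rightarrow> (nat \<Rightarrow> quat) \<Rightarrow> (nat \<Rightarrow> quat) set" where
  "kclass K \<xi> = {(\<lambda>i. g * \<xi> i) | g. g \<in> K}"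

definition restr :: "nat set \<Rightarrow> (nat \<Rightarrow> quat) \<Rightarrow> (nat \<Rightarrow> quat)" where
  "restr B \<xi> = (\<lambda>i. if i \<in> B then \<xi> i else 0)"

definition dowling :: "nat \<Rightarrow> quat set \<Rightarrow> (nat set \<times> (nat \<Rightarrow> quat) set) set set" where
  "dowling n K = {\<pi>. (\<forall>(B, C)\<in>\<pi>. B \<noteq> {} \<and> B \<subseteq> {..<n} \<and> (\<exists>\<xi>\<in>kfuns K B. C = kclass K \<xi>)) \<and>
      (\<forall>b1\<in>\<pi>. \<forall>b2\<in>\<pi>. b1 \<noteq> b2 \<longrightarrow> fst b1 \<inter> fst b2 = {})}"

definition dowling_le :: "(nat set \<times> (nat \<Rightarrow> quat) set) set \<Rightarrow> (nat set \<times> (nat \<Rightarrow> quat) set) set \<Rightarrow> bool" where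
  "dowling_le \<pi> \<pi>' \<longleftrightarrow> (\<forall>(B', C')\<in>\<pi>'. \<exists>S\<subseteq>\<pi>. B' = \<Union>(fst ` S) \<and>
      (\<forall>(B, C)\<in>S. \<forall>\<xi>'\<in>C'. restr B \<xi>' \<in> C))"

definition poset_iso :: "'a set \<Rightarrow> ('a \<Rightarrow> 'a \<Rightarrow> bool) \<Rightarrow> 'b set \<Rightarrow> ('b \<Rightarrow> 'b \<Rightarrow> bool) \<Rightarrow> bool" where
  "poset_iso X le Y le' \<longleftrightarrow> (\<exists>f. bij_betw f X Y \<and> (\<forall>x\<in>X. \<forall>y\<in>X. le x y \<longleftrightarrow> le' (f x) (f y)))"

end

theory Submission
  imports Defs
begin

text \<open>Every element of G_n(K,H) is a monomial matrix with entries in K. So if g fixes a set X of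
  vectors, it also fixes every vector that vanishes wherever all of X vanishes and satisfies every
  relation x_j = a x_i (a in K) valid on X; these vectors form the flat of a partial K-partition,
  the Dowling hull of X. Conversely every such flat is an intersection of reflecting hyperplanes:
  x_i = 0 is fixed by diag(1,..,h,..,1) for h in H - {1}, and x_i = a x_j by a monomial reflection
  exchanging the coordinates i and j. Hence the parabolic subgroups are the pointwise stabilisers
  of flats, the intersection lattice consists of the flats, and reverse inclusion of flats is the
  Dowling order.\<close>

lemma quat_subgroup_nonzero: "quat_subgroup K \<Longrightarrow> k \<in> K \<Longrightarrow> k \<noteq> 0"
  and quat_subgroup_one: "quat_subgroup K \<Longrightarrow> 1 \<in> K"
  and quat_subgroup_mult: "quat_subgroup K \<Longrightarrow> a \<in> K \<Longrightarrow> b \<in> K \<Longrightarrow> a * b \<in> K"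
  and quat_subgroup_inverse: "quat_subgroup K \<Longrightarrow> k \<in> K \<Longrightarrow> inverse k \<in> K"
  unfolding quat_subgroup_def by blast+

lemma quat_subgroup_finite_order:
  assumes K: "quat_subgroup K" and fin: "finite K" and h: "h \<in> K"
  shows "\<exists>m>0. h ^ m = 1"
proof -
  have "h ^ k \<in> K" for k
    by (induction k) (simp_all add: quat_subgroup_one[OF K] quat_subgroup_mult[OF K h])
  then have "finite (range (\<lambda>k::nat. h ^ k))"
    using finite_subset[OF _ fin] by blast
  then have "\<not> inj (\<lambda>k::nat. h ^ k)"
    using finite_imageD infinite_UNIV_nat by blast
  then obtain a b :: nat where ab: "a \<noteq> b" "h ^ a = h ^ b"
    unfolding inj_def by blast
  have "\<exists>a b :: nat. a < b \<and> h ^ a = h ^ b"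
  proof (cases "a < b")
    case False
    with ab have "b < a" "h ^ b = h ^ a" by auto
    then show ?thesis by blast
  qed (use ab in blast)
  then obtain a b :: nat where "a < b" and "h ^ a = h ^ b"
    by blast
  have "h ^ a * h ^ (b - a) = h ^ b"
    using \<open>a < b\<close> by (simp flip: power_add)
  then have "h ^ a * h ^ (b - a) = h ^ a * 1"
    using \<open>h ^ a = h ^ b\<close> by simp
  moreover have "h \<noteq> 0"
    using quat_subgroup_nonzero[OF K h] .
  ultimately show ?thesis
    using \<open>a < b\<close> by (intro exI[of _ "b - a"]) simp
qed

subsection \<open>Monomial matrices\<close>

definition monomial :: "nat \<Rightarrow> (nat \<Rightarrow> nat) \<Rightarrow> (nat \<Rightarrow> quat) \<Rightarrow> nat \<Rightarrow> nat \<Rightarrow> quat" where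
  "monomial n p c = (\<lambda>k l. if k < n \<and> l < n \<and> k = p l then c l else 0)"

definition is_monomial :: "nat \<Rightarrow> quat set \<Rightarrow> (nat \<Rightarrow> nat \<Rightarrow> quat) \<Rightarrow> bool" where
  "is_monomial n K g \<longleftrightarrow> (\<exists>p c. p permutes {..<n} \<and> (\<forall>l<n. c l \<in> K) \<and> g = monomial n p c)"

lemma is_monomialI: "p permutes {..<n} \<Longrightarrow> (\<And>l. l < n \<Longrightarrow> c l \<in> K) \<Longrightarrow> is_monomial n K (monomial n p c)"
  unfolding is_monomial_def by blast

lemma permutes_less_iff: "p permutes {..<n} \<Longrightarrow> p l < n \<longleftrightarrow> l < n"
  using permutes_in_image[of p "{..<n}" l] by simp

lemma permutes_inv_less_iff: "p permutes {..<n} \<Longrightarrow> inv p l < n \<longleftrightarrow> l < n"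
  using permutes_less_iff[OF permutes_inv] .

lemma monomial_cong:
  "(\<And>l. l < n \<Longrightarrow> p l = q l) \<Longrightarrow> (\<And>l. l < n \<Longrightarrow> c l = d l) \<Longrightarrow> monomial n p c = monomial n q d"
  by (auto simp: monomial_def fun_eq_iff)

lemma idm_eq_monomial: "idm n = monomial n id (\<lambda>_. 1)"
  and diagm_eq_monomial: "diagm n d = monomial n id d"
  and permm_eq_monomial: "permm n p = monomial n p (\<lambda>_. 1)"
  by (auto simp: idm_def diagm_def permm_def monomial_def fun_eq_iff)

lemma mmul_monomial_right:
  assumes p: "p permutes {..<n}" and "i < n" "j < n"
  shows "mmul n B (monomial n p c) i j = B i (p j) * c j"
proof -
  have "(\<Sum>k<n. B i k * monomial n p c k j) = (\<Sum>k<n. if k = p j then B i (p j) * c j else 0)"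
    by (rule sum.cong) (auto simp: monomial_def assms)
  then show ?thesis
    using permutes_less_iff[OF p, of j] assms by (simp add: mmul_def)
qed

lemma mmul_monomial:
  assumes p: "p permutes {..<n}" and q: "q permutes {..<n}"
  shows "mmul n (monomial n p c) (monomial n q d) = monomial n (p \<circ> q) (\<lambda>l. c (q l) * d l)"
proof (intro ext)
  fix i j
  show "mmul n (monomial n p c) (monomial n q d) i j = monomial n (p \<circ> q) (\<lambda>l. c (q l) * d l) i j"
  proof (cases "i < n \<and> j < n")
    case True
    then have "mmul n (monomial n p c) (monomial n q d) i j = monomial n p c i (q j) * d j"
      by (simp add: mmul_monomial_right[OF q])
    then show ?thesis
      using True permutes_less_iff[OF q, of j] by (simp add: monomial_def)
  qed (auto simp: mmul_def monomial_def)
qed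

lemma mmul_monomial_idm: "p permutes {..<n} \<Longrightarrow> mmul n (monomial n p c) (idm n) = monomial n p c"
  unfolding idm_eq_monomial by (simp add: mmul_monomial)

lemma mvec_monomial:
  assumes p: "p permutes {..<n}"
  shows "mvec n (monomial n p c) v = (\<lambda>k. if k < n then c (inv p k) * v (inv p k) else 0)"
proof (intro ext)
  fix k
  show "mvec n (monomial n p c) v k = (if k < n then c (inv p k) * v (inv p k) else 0)"
  proof (cases "k < n")
    case True
    have "(\<Sum>l<n. monomial n p c k l * v l) = (\<Sum>l<n. if l = inv p k then c l * v l else 0)"
      using True by (intro sum.cong) (auto simp: monomial_def permutes_inv_eq[OF p] permutes_inverses[OF p])
    then show ?thesis
      using True permutes_inv_less_iff[OF p, of k] by (simp add: mvec_def)
  qed (simp add: mvec_def)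
qed

lemma mvec_monomial_fixes_iff:
  assumes p: "p permutes {..<n}" and v: "v \<in> qvecs n"
  shows "mvec n (monomial n p c) v = v \<longleftrightarrow> (\<forall>m<n. v (p m) = c m * v m)"
proof
  assume fixed: "mvec n (monomial n p c) v = v"
  show "\<forall>m<n. v (p m) = c m * v m"
  proof (intro allI impI)
    fix m assume "m < n"
    then show "v (p m) = c m * v m"
      using fun_cong[OF fixed, of "p m"] permutes_less_iff[OF p, of m]
      by (simp add: mvec_monomial[OF p] permutes_inverses(2)[OF p])
  qed
next
  assume rel: "\<forall>m<n. v (p m) = c m * v m"
  show "mvec n (monomial n p c) v = v"
  proof
    fix k
    show "mvec n (monomial n p c) v k = v k"
    proof (cases "k < n")
      case True
      then show ?thesis
        using rel[rule_format, of "inv p k"] permutes_inv_less_iff[OF p, of k]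
        by (simp add: mvec_monomial[OF p] permutes_inverses(1)[OF p])
    qed (use v in \<open>simp add: mvec_monomial[OF p] qvecs_def\<close>)
  qed
qed

lemma monomial_inverse:
  assumes p: "p permutes {..<n}" and c: "\<forall>l<n. c l \<noteq> 0"
  defines "M' \<equiv> monomial n (inv p) (\<lambda>m. inverse (c (inv p m)))"
  shows "mmul n M' (monomial n p c) = idm n" "mmul n (monomial n p c) M' = idm n"
  unfolding M'_def idm_eq_monomial mmul_monomial[OF permutes_inv[OF p] p]
    mmul_monomial[OF p permutes_inv[OF p]]
  by (auto intro!: monomial_cong simp: permutes_inverses[OF p] c permutes_inv_less_iff[OF p])

text \<open>minv is a choice that is determined only on the index range, hence the statement through mmul.\<close>

lemma mmul_minv_monomial:
  assumes p: "p permutes {..<n}" and c: "\<forall>l<n. c l \<noteq> 0"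
  shows "mmul n (minv n (monomial n p c)) g = mmul n (monomial n (inv p) (\<lambda>m. inverse (c (inv p m)))) g"
proof -
  define M' where "M' = monomial n (inv p) (\<lambda>m. inverse (c (inv p m)))"
  define B where "B = minv n (monomial n p c)"
  have "\<exists>B. mmul n (monomial n p c) B = idm n \<and> mmul n B (monomial n p c) = idm n"
    using monomial_inverse[OF p c] by blast
  then have "mmul n (monomial n p c) B = idm n \<and> mmul n B (monomial n p c) = idm n"
    unfolding B_def minv_def by (rule someI_ex)
  then have "mmul n B (monomial n p c) = idm n" ..
  have entry: "B i m = M' i m" if "i < n" "m < n" for i m
  proof -
    define j where "j = inv p m"
    have j: "j < n" "p j = m"
      using that permutes_inv_less_iff[OF p] permutes_inverses[OF p] by (auto simp: j_def)
    have "B i m * c j = idm n i j"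
      using mmul_monomial_right[OF p that(1) j(1), of B c] \<open>mmul n B _ = idm n\<close> j(2) by simp
    then have "B i m = idm n i j * inverse (c j)"
      using c j(1) by (metis mult.assoc right_inverse mult_1_right)
    then show ?thesis
      using that j by (simp add: M'_def monomial_def idm_def j_def)
  qed
  show ?thesis
    unfolding B_def[symmetric] M'_def[symmetric] mmul_def by (intro ext) (auto simp: entry intro!: sum.cong)
qed

lemma is_monomial_mmul:
  assumes K: "quat_subgroup K" and "is_monomial n K a" "is_monomial n K g"
  shows "is_monomial n K (mmul n a g)"
proof -
  obtain p c where p: "p permutes {..<n}" "\<forall>l<n. c l \<in> K" "a = monomial n p c"
    using assms(2) unfolding is_monomial_def by blast
  obtain q d where q: "q permutes {..<n}" "\<forall>l<n. d l \<in> K" "g = monomial n q d"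
    using assms(3) unfolding is_monomial_def by blast
  show ?thesis
    unfolding p(3) q(3) mmul_monomial[OF p(1) q(1)]
    using p(2) q(2) permutes_less_iff[OF q(1)] quat_subgroup_mult[OF K]
    by (intro is_monomialI permutes_compose[OF q(1) p(1)]) simp
qed

lemma is_monomial_mmul_minv:
  assumes K: "quat_subgroup K" and "is_monomial n K a" "is_monomial n K g"
  shows "is_monomial n K (mmul n (minv n a) g)"
proof -
  obtain p c where p: "p permutes {..<n}" and c: "\<forall>l<n. c l \<in> K" and a: "a = monomial n p c"
    using assms(2) unfolding is_monomial_def by blast
  define c' where "c' = (\<lambda>m. inverse (c (inv p m)))"
  have "is_monomial n K (monomial n (inv p) c')"
    using c quat_subgroup_inverse[OF K] permutes_inv_less_iff[OF p]
    by (intro is_monomialI permutes_inv[OF p]) (simp add: c'_def)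
  moreover have "mmul n (minv n a) g = mmul n (monomial n (inv p) c') g"
    using a mmul_minv_monomial[OF p] c quat_subgroup_nonzero[OF K] by (simp add: c'_def)
  ultimately show ?thesis
    using is_monomial_mmul[OF K _ assms(3)] by simp
qed

lemma Gn_generator_is_monomial:
  assumes K: "quat_subgroup K" and a: "a \<in> An n K H \<union> {permm n p | p. p permutes {..<n}}"
  shows "is_monomial n K a"
  using a quat_subgroup_one[OF K]
  by (auto simp: An_def diagm_eq_monomial permm_eq_monomial intro!: is_monomialI permutes_id)

lemma Gn_is_monomial:
  assumes K: "quat_subgroup K" and "g \<in> Gn n K H"
  shows "is_monomial n K g"
  using assms(2) unfolding Gn_def
proof (induction rule: gen_group.induct)
  case gen_id
  show ?case
    unfolding idm_eq_monomial using quat_subgroup_one[OF K] by (intro is_monomialI permutes_id)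
next
  case (gen_mul a g)
  then show ?case
    using is_monomial_mmul[OF K] Gn_generator_is_monomial[OF K] by blast
next
  case (gen_inv a g)
  then show ?case
    using is_monomial_mmul_minv[OF K] Gn_generator_is_monomial[OF K] by blast
qed

subsection \<open>Reflections of G_n(K,H)\<close>

lemma An_subset_Gn: "An n K H \<subseteq> Gn n K H"
proof
  fix a assume a: "a \<in> An n K H"
  then have "mmul n a (idm n) \<in> Gn n K H"
    unfolding Gn_def by (blast intro: gen_group.intros)
  moreover obtain d where "a = monomial n id d"
    using a unfolding An_def diagm_eq_monomial by blast
  ultimately show "a \<in> Gn n K H"
    using mmul_monomial_idm[OF permutes_id] by simp
qed

lemma mmul_permm_in_Gn:
  "p permutes {..<n} \<Longrightarrow> g \<in> Gn n K H \<Longrightarrow> mmul n (permm n p) g \<in> Gn n K H"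
  unfolding Gn_def by (blast intro: gen_group.intros)

lemma prod_list_map_single:
  "distinct xs \<Longrightarrow> prod_list (map (\<lambda>l. if l = i then h else (1::'a::monoid_mult)) xs)
    = (if i \<in> set xs then h else 1)"
  by (induction xs) auto

lemma prod_list_map_inverse_pair:
  assumes "i \<noteq> j" "(a::'a::division_ring) \<noteq> 0"
  shows "distinct xs \<Longrightarrow> prod_list (map (\<lambda>l. if l = i then inverse a else if l = j then a else 1) xs) =
    (if i \<in> set xs then (if j \<in> set xs then 1 else inverse a) else (if j \<in> set xs then a else 1))"
  using assms by (induction xs) auto

definition diag_reflection :: "nat \<Rightarrow> quat \<Rightarrow> nat \<Rightarrow> nat \<Rightarrow> nat \<Rightarrow> quat" where
  "diag_reflection n h i = monomial n id (\<lambda>l. if l = i then h else 1)"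

text \<open>It sends x_i to a x_j and x_j to a^-1 x_i, so its reflecting hyperplane is x_i = a x_j.\<close>

definition transp_reflection :: "nat \<Rightarrow> quat \<Rightarrow> nat \<Rightarrow> nat \<Rightarrow> nat \<Rightarrow> nat \<Rightarrow> quat" where
  "transp_reflection n a i j =
     monomial n (transpose i j) (\<lambda>l. if l = i then inverse a else if l = j then a else 1)"

lemma mvec_diag_reflection:
  "mvec n (diag_reflection n h i) v = (\<lambda>k. if k < n then (if k = i then h else 1) * v k else 0)"
  unfolding diag_reflection_def mvec_monomial[OF permutes_id] by (simp only: inv_id id_apply)

lemma mvec_transp_reflection:
  assumes "i < n" "j < n" "i \<noteq> j"
  shows "mvec n (transp_reflection n a i j) v =
    (\<lambda>k. if k < n then (if k = i then a * v j else if k = j then inverse a * v i else v k) else 0)"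
proof -
  have "transpose i j permutes {..<n}"
    using assms by (intro permutes_swap_id) auto
  then show ?thesis
    unfolding transp_reflection_def using assms
    by (auto simp: mvec_monomial transpose_def fun_eq_iff)
qed

lemma diag_reflection_in_Gn:
  assumes K: "quat_subgroup K" and "H \<subseteq> K" "h \<in> H" "i < n"
  shows "diag_reflection n h i \<in> Gn n K H"
proof -
  have "diag_reflection n h i \<in> An n K H"
    unfolding An_def diagm_eq_monomial diag_reflection_def
    using assms quat_subgroup_one[OF K] prod_list_map_single[of "[0..<n]" i h]
    by (intro CollectI exI[of _ "\<lambda>l. if l = i then h else 1"]) auto
  then show ?thesis
    using An_subset_Gn by blast
qed

lemma transp_reflection_in_Gn:
  assumes K: "quat_subgroup K" and H: "quat_subgroup H" and a: "a \<in> K"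
    and ij: "i < n" "j < n" "i \<noteq> j"
  shows "transp_reflection n a i j \<in> Gn n K H"
proof -
  define d where "d = (\<lambda>l. if l = i then inverse a else if l = j then a else (1::quat))"
  have p: "transpose i j permutes {..<n}"
    using ij by (intro permutes_swap_id) auto
  have "prod_list (map d [0..<n]) = 1"
    unfolding d_def using prod_list_map_inverse_pair[OF ij(3) quat_subgroup_nonzero[OF K a]] ij
    by simp
  then have "monomial n id d \<in> An n K H"
    unfolding An_def diagm_eq_monomial d_def
    using a quat_subgroup_inverse[OF K] quat_subgroup_one[OF K] quat_subgroup_one[OF H] by auto
  then have "mmul n (permm n (transpose i j)) (monomial n id d) \<in> Gn n K H"
    using An_subset_Gn mmul_permm_in_Gn[OF p] by blast
  then show ?thesis
    unfolding permm_eq_monomial mmul_monomial[OF p permutes_id] transp_reflection_def d_def by simp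
qed

lemma fixspace_diag_reflection:
  assumes "h \<noteq> 1" "i < n"
  shows "fixspace n (diag_reflection n h i) = {v \<in> qvecs n. v i = 0}"
proof -
  have "h * x = x \<longleftrightarrow> x = 0" for x :: quat
  proof -
    have "h * x = x \<longleftrightarrow> (h - 1) * x = 0"
      by (simp add: algebra_simps)
    then show ?thesis
      using assms(1) by simp
  qed
  then show ?thesis
    using assms(2) unfolding fixspace_def mvec_diag_reflection qvecs_def
    by (auto simp: fun_eq_iff)
qed

lemma fixspace_transp_reflection:
  assumes "a \<noteq> 0" "i < n" "j < n" "i \<noteq> j"
  shows "fixspace n (transp_reflection n a i j) = {v \<in> qvecs n. v i = a * v j}"
proof -
  have "inverse a * x = y \<longleftrightarrow> x = a * y" for x y :: quat
    using assms(1) by (auto simp flip: mult.assoc)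
  then show ?thesis
    using assms(2-4) unfolding fixspace_def mvec_transp_reflection[OF assms(2-4)] qvecs_def
    by (auto simp: fun_eq_iff)
qed

lemma single_in_qvecs: "i < n \<Longrightarrow> (\<lambda>k. if k = i then x else 0) \<in> qvecs n"
  by (simp add: qvecs_def)

lemma is_reflectionI:
  assumes "g \<in> G" "m > 0" "mpow n g m = idm n" "w \<in> qvecs n" "w \<noteq> (\<lambda>_. 0)"
    and image: "\<And>v. v \<in> qvecs n \<Longrightarrow> (\<lambda>k. v k - mvec n g v k) = (\<lambda>k. w k * f v)"
    and onto: "\<And>q. \<exists>v\<in>qvecs n. f v = q"
  shows "is_reflection n G g"
proof -
  have "(\<lambda>v k. v k - mvec n g v k) ` qvecs n = {\<lambda>k. w k * q | q. True}"
  proof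
    show "{\<lambda>k. w k * q | q. True} \<subseteq> (\<lambda>v k. v k - mvec n g v k) ` qvecs n"
    proof clarify
      fix q
      obtain v where "v \<in> qvecs n" "f v = q"
        using onto by blast
      then show "(\<lambda>k. w k * q) \<in> (\<lambda>v k. v k - mvec n g v k) ` qvecs n"
        using image by (intro image_eqI[of _ _ v]) auto
    qed
  qed (use image in blast)
  then show ?thesis
    unfolding is_reflection_def using assms(1-5) by blast
qed

lemma mpow_diagonal: "mpow n (monomial n id c) m = monomial n id (\<lambda>l. c l ^ m)"
proof (induction m)
  case 0
  show ?case
    unfolding mpow_def idm_eq_monomial by (simp add: id_def)
next
  case (Suc m)
  show ?case
    unfolding mpow_def funpow.simps(2) comp_def Suc.IH[unfolded mpow_def]
      mmul_monomial[OF permutes_id permutes_id]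
    by simp
qed

lemma is_reflection_diag_reflection:
  assumes K: "quat_subgroup K" and "finite K" and HK: "H \<subseteq> K" and h: "h \<in> H" "h \<noteq> 1"
    and i: "i < n"
  shows "is_reflection n (Gn n K H) (diag_reflection n h i)"
proof -
  obtain m where m: "m > 0" "h ^ m = 1"
    using quat_subgroup_finite_order[OF K \<open>finite K\<close>] h HK by blast
  have mpow: "mpow n (diag_reflection n h i) m = idm n"
    unfolding diag_reflection_def mpow_diagonal idm_eq_monomial
    using m(2) by (intro monomial_cong) auto
  have image: "(\<lambda>k. v k - mvec n (diag_reflection n h i) v k)
      = (\<lambda>k. (if k = i then 1 else 0) * ((1 - h) * v i))" if "v \<in> qvecs n" for v
    using that i unfolding mvec_diag_reflection qvecs_def by (auto simp: algebra_simps)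
  have onto: "\<exists>v\<in>qvecs n. (1 - h) * v i = q" for q
  proof (rule bexI[OF _ single_in_qvecs[OF i]])
    show "(1 - h) * (\<lambda>k. if k = i then inverse (1 - h) * q else 0) i = q"
      using h(2) by (simp flip: mult.assoc)
  qed
  show ?thesis
    by (rule is_reflectionI[OF diag_reflection_in_Gn[OF K HK h(1) i] m(1) mpow
          single_in_qvecs[OF i] _ image onto]) (auto dest: fun_cong[where x = i])
qed

lemma mpow_transp_reflection:
  assumes "a \<noteq> 0" and ij: "i < n" "j < n" "i \<noteq> j"
  shows "mpow n (transp_reflection n a i j) 2 = idm n"
proof -
  have p: "transpose i j permutes {..<n}"
    using ij by (intro permutes_swap_id) auto
  have "mpow n (transp_reflection n a i j) 2
      = mmul n (transp_reflection n a i j) (transp_reflection n a i j)"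
    unfolding mpow_def transp_reflection_def by (simp add: numeral_2_eq_2 mmul_monomial_idm[OF p])
  also have "\<dots> = idm n"
    unfolding transp_reflection_def mmul_monomial[OF p p] idm_eq_monomial
    using assms by (intro monomial_cong) (auto simp: transpose_def)
  finally show ?thesis .
qed

lemma is_reflection_transp_reflection:
  assumes K: "quat_subgroup K" and H: "quat_subgroup H" and a: "a \<in> K"
    and ij: "i < n" "j < n" "i \<noteq> j"
  shows "is_reflection n (Gn n K H) (transp_reflection n a i j)"
proof -
  have a0: "a \<noteq> 0"
    using quat_subgroup_nonzero[OF K a] .
  have image: "(\<lambda>k. v k - mvec n (transp_reflection n a i j) v k)
      = (\<lambda>k. (if k = i then 1 else if k = j then - inverse a else 0) * (v i - a * v j))"
    if "v \<in> qvecs n" for v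
  proof -
    have "inverse a * (a * x) = x" for x
      using a0 by (simp flip: mult.assoc)
    then show ?thesis
      using that ij unfolding mvec_transp_reflection[OF ij] qvecs_def
      by (auto simp: fun_eq_iff algebra_simps)
  qed
  have onto: "\<exists>v\<in>qvecs n. v i - a * v j = q" for q
  proof (rule bexI[OF _ single_in_qvecs[OF ij(1)]])
    show "(\<lambda>k. if k = i then q else 0) i - a * (\<lambda>k. if k = i then q else 0) j = q"
      using ij by simp
  qed
  define w :: "nat \<Rightarrow> quat" where "w = (\<lambda>k. if k = i then 1 else if k = j then - inverse a else 0)"
  have "w \<in> qvecs n"
    using ij by (simp add: w_def qvecs_def)
  moreover have "w \<noteq> (\<lambda>_. 0)"
    by (auto simp: w_def dest: fun_cong[where x = i])
  ultimately show ?thesis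
    unfolding w_def
    by (rule is_reflectionI[OF transp_reflection_in_Gn[OF K H a ij] pos2
          mpow_transp_reflection[OF a0 ij] _ _ image onto])
qed

subsection \<open>Flats of partial K-partitions\<close>

definition dowling_flat :: "nat \<Rightarrow> (nat set \<times> (nat \<Rightarrow> quat) set) set \<Rightarrow> (nat \<Rightarrow> quat) set" where
  "dowling_flat n \<pi> = {x \<in> qvecs n. (\<forall>i<n. i \<notin> \<Union>(fst ` \<pi>) \<longrightarrow> x i = 0) \<and>
      (\<forall>(B, C)\<in>\<pi>. \<forall>\<xi>\<in>C. \<forall>i\<in>B. \<forall>j\<in>B. \<xi> i * x i = \<xi> j * x j)}"

lemma dowling_flatD:
  assumes "x \<in> dowling_flat n \<pi>"
  shows "x \<in> qvecs n" "\<And>i. i < n \<Longrightarrow> i \<notin> \<Union>(fst ` \<pi>) \<Longrightarrow> x i = 0"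
    "\<And>B C \<xi> i j. (B, C) \<in> \<pi> \<Longrightarrow> \<xi> \<in> C \<Longrightarrow> i \<in> B \<Longrightarrow> j \<in> B \<Longrightarrow> \<xi> i * x i = \<xi> j * x j"
  using assms unfolding dowling_flat_def by fastforce+

lemma dowling_flatI:
  assumes "x \<in> qvecs n" "\<And>i. i < n \<Longrightarrow> i \<notin> \<Union>(fst ` \<pi>) \<Longrightarrow> x i = 0"
    "\<And>B C \<xi> i j. (B, C) \<in> \<pi> \<Longrightarrow> \<xi> \<in> C \<Longrightarrow> i \<in> B \<Longrightarrow> j \<in> B \<Longrightarrow> \<xi> i * x i = \<xi> j * x j"
  shows "x \<in> dowling_flat n \<pi>"
  using assms unfolding dowling_flat_def by blast

lemma dowling_blockD:
  assumes "\<pi> \<in> dowling n K" "(B, C) \<in> \<pi>"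
  shows "B \<noteq> {}" "B \<subseteq> {..<n}" "\<exists>\<xi>\<in>kfuns K B. C = kclass K \<xi>"
  using assms unfolding dowling_def by fastforce+

lemma dowling_block_unique:
  assumes "\<pi> \<in> dowling n K" "(B, C) \<in> \<pi>" "(B', C') \<in> \<pi>" "i \<in> B" "i \<in> B'"
  shows "B = B' \<and> C = C'"
  using assms unfolding dowling_def by fastforce

lemma kfunsD: "\<xi> \<in> kfuns K B \<Longrightarrow> i \<in> B \<Longrightarrow> \<xi> i \<in> K"
  "\<xi> \<in> kfuns K B \<Longrightarrow> i \<notin> B \<Longrightarrow> \<xi> i = 0"
  unfolding kfuns_def by auto

lemma kclass_refl: "quat_subgroup K \<Longrightarrow> \<xi> \<in> kclass K \<xi>"
  unfolding kclass_def using quat_subgroup_one by fastforce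

lemma kclass_left_multiple:
  assumes K: "quat_subgroup K" and "\<xi> \<in> kclass K \<zeta>" "\<eta> \<in> kclass K \<zeta>"
  shows "\<exists>g\<in>K. \<xi> = (\<lambda>i. g * \<eta> i)"
proof -
  obtain a b where ab: "a \<in> K" "\<xi> = (\<lambda>i. a * \<zeta> i)" "b \<in> K" "\<eta> = (\<lambda>i. b * \<zeta> i)"
    using assms(2,3) unfolding kclass_def by blast
  have "\<xi> = (\<lambda>i. (a * inverse b) * \<eta> i)"
    using ab quat_subgroup_nonzero[OF K ab(3)] by (simp add: mult.assoc flip: mult.assoc[of "inverse b"])
  then show ?thesis
    using ab quat_subgroup_mult[OF K] quat_subgroup_inverse[OF K] by blast
qed

lemma kclass_eq:
  assumes K: "quat_subgroup K" and "\<eta> \<in> kclass K \<xi>"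
  shows "kclass K \<eta> = kclass K \<xi>"
proof -
  have "kclass K \<eta> \<subseteq> kclass K \<xi>" if \<eta>: "\<eta> \<in> kclass K \<xi>" for \<eta> \<xi>
  proof
    fix \<zeta> assume "\<zeta> \<in> kclass K \<eta>"
    then obtain a b where "a \<in> K" "\<zeta> = (\<lambda>i. a * \<eta> i)" "b \<in> K" "\<eta> = (\<lambda>i. b * \<xi> i)"
      using \<eta> unfolding kclass_def by blast
    then show "\<zeta> \<in> kclass K \<xi>"
      unfolding kclass_def using quat_subgroup_mult[OF K]
      by (intro CollectI exI[of _ "a * b"]) (auto simp: mult.assoc)
  qed
  moreover have "\<xi> \<in> kclass K \<eta>"
    using kclass_left_multiple[OF K kclass_refl[OF K] assms(2)] unfolding kclass_def by blast
  ultimately show ?thesis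
    using assms(2) by blast
qed

lemma dowling_class_values:
  assumes K: "quat_subgroup K" and "\<pi> \<in> dowling n K" "(B, C) \<in> \<pi>" "\<xi> \<in> C" "i \<in> B"
  shows "\<xi> i \<in> K"
proof -
  obtain \<xi>0 where "\<xi>0 \<in> kfuns K B" "C = kclass K \<xi>0"
    using dowling_blockD(3)[OF assms(2,3)] by blast
  then show ?thesis
    using assms(4,5) kfunsD(1) quat_subgroup_mult[OF K] unfolding kclass_def by auto
qed

definition block_vector :: "(nat \<Rightarrow> quat) \<Rightarrow> nat set \<Rightarrow> nat \<Rightarrow> quat" where
  "block_vector \<xi> B = (\<lambda>i. if i \<in> B then inverse (\<xi> i) else 0)"

lemma block_vector_in_dowling_flat:
  assumes K: "quat_subgroup K" and \<pi>: "\<pi> \<in> dowling n K" and b: "(B', kclass K \<xi>') \<in> \<pi>"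
    and \<xi>': "\<xi>' \<in> kfuns K B'"
  shows "block_vector \<xi>' B' \<in> dowling_flat n \<pi>"
proof (rule dowling_flatI)
  show "block_vector \<xi>' B' \<in> qvecs n"
    using dowling_blockD(2)[OF \<pi> b] unfolding qvecs_def block_vector_def by auto
  show "block_vector \<xi>' B' i = 0" if "i < n" "i \<notin> \<Union>(fst ` \<pi>)" for i
    using that b unfolding block_vector_def by force
  show "\<xi> i * block_vector \<xi>' B' i = \<xi> j * block_vector \<xi>' B' j"
    if h: "(B, C) \<in> \<pi>" "\<xi> \<in> C" "i \<in> B" "j \<in> B" for B C \<xi> i j
  proof (cases "B \<inter> B' = {}")
    case True
    then show ?thesis
      using h unfolding block_vector_def by auto
  next
    case False
    then have "B = B'" "C = kclass K \<xi>'"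
      using dowling_block_unique[OF \<pi> h(1) b] by auto
    moreover obtain g where "\<xi> = (\<lambda>i. g * \<xi>' i)"
      using kclass_left_multiple[OF K h(2)[unfolded \<open>C = _\<close>] kclass_refl[OF K]] by blast
    moreover have "\<xi>' i \<noteq> 0" "\<xi>' j \<noteq> 0"
      using kfunsD(1)[OF \<xi>'] h \<open>B = B'\<close> quat_subgroup_nonzero[OF K] by auto
    ultimately show ?thesis
      using h unfolding block_vector_def by (simp add: mult.assoc)
  qed
qed

lemma restr_in_kclass:
  assumes K: "quat_subgroup K" and \<xi>: "\<xi> \<in> kfuns K B" and c: "c \<in> K"
    and ratio: "\<And>j. j \<in> B \<Longrightarrow> \<xi>' j = c * \<xi> j" and \<eta>: "\<eta> \<in> kclass K \<xi>'"
  shows "restr B \<eta> \<in> kclass K \<xi>"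
proof -
  obtain g where g: "g \<in> K" "\<eta> = (\<lambda>i. g * \<xi>' i)"
    using \<eta> unfolding kclass_def by blast
  have "restr B \<eta> = (\<lambda>j. (g * c) * \<xi> j)"
    using ratio g kfunsD(2)[OF \<xi>] unfolding restr_def by (auto simp: mult.assoc)
  then show ?thesis
    unfolding kclass_def using g c quat_subgroup_mult[OF K] by blast
qed

lemma dowling_flat_subset_support:
  assumes K: "quat_subgroup K" and \<pi>': "\<pi>' \<in> dowling n K"
    and sub: "dowling_flat n \<pi>' \<subseteq> dowling_flat n \<pi>" and b': "(B', C') \<in> \<pi>'"
  shows "B' \<subseteq> \<Union>(fst ` \<pi>)"
proof
  fix i assume i: "i \<in> B'"
  obtain \<xi>' where \<xi>': "\<xi>' \<in> kfuns K B'" "C' = kclass K \<xi>'"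
    using dowling_blockD(3)[OF \<pi>' b'] by blast
  have "block_vector \<xi>' B' \<in> dowling_flat n \<pi>"
    using block_vector_in_dowling_flat[OF K \<pi>' b'[unfolded \<xi>'(2)] \<xi>'(1)] sub by blast
  moreover have "block_vector \<xi>' B' i \<noteq> 0"
    using i kfunsD(1)[OF \<xi>'(1) i] quat_subgroup_nonzero[OF K] unfolding block_vector_def by simp
  moreover have "i < n"
    using dowling_blockD(2)[OF \<pi>' b'] i by auto
  ultimately show "i \<in> \<Union>(fst ` \<pi>)"
    using dowling_flatD(2) by blast
qed

lemma dowling_flat_subset_block:
  assumes K: "quat_subgroup K" and \<pi>: "\<pi> \<in> dowling n K" and \<pi>': "\<pi>' \<in> dowling n K"
    and sub: "dowling_flat n \<pi>' \<subseteq> dowling_flat n \<pi>" and b': "(B', C') \<in> \<pi>'" and b: "(B, C) \<in> \<pi>"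
    and i: "i \<in> B" "i \<in> B'"
  shows "B \<subseteq> B' \<and> (\<forall>\<eta>\<in>C'. restr B \<eta> \<in> C)"
proof -
  obtain \<xi>' where \<xi>': "\<xi>' \<in> kfuns K B'" "C' = kclass K \<xi>'"
    using dowling_blockD(3)[OF \<pi>' b'] by blast
  obtain \<xi> where \<xi>: "\<xi> \<in> kfuns K B" "C = kclass K \<xi>"
    using dowling_blockD(3)[OF \<pi> b] by blast
  define v where "v = block_vector \<xi>' B'"
  have v: "v \<in> dowling_flat n \<pi>"
    using block_vector_in_dowling_flat[OF K \<pi>' b'[unfolded \<xi>'(2)] \<xi>'(1)] sub unfolding v_def by blast
  define s where "s = \<xi> i * inverse (\<xi>' i)"
  have s: "s \<in> K" "s \<noteq> 0"
    unfolding s_def using kfunsD(1)[OF \<xi>(1) i(1)] kfunsD(1)[OF \<xi>'(1) i(2)] quat_subgroup_nonzero[OF K]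
      quat_subgroup_mult[OF K] quat_subgroup_inverse[OF K] by auto
  have const: "\<xi> j * v j = s" if "j \<in> B" for j
    using dowling_flatD(3)[OF v b kclass_refl[OF K, of \<xi>, folded \<xi>(2)] that i(1)] i(2)
    unfolding v_def block_vector_def s_def by simp
  have BB': "B \<subseteq> B'"
  proof
    fix j assume "j \<in> B"
    then have "v j \<noteq> 0"
      using const s(2) by force
    then show "j \<in> B'"
      unfolding v_def block_vector_def by presburger
  qed
  have ratio: "\<xi>' j = inverse s * \<xi> j" if j: "j \<in> B" for j
  proof -
    have "\<xi>' j \<noteq> 0"
      using kfunsD(1)[OF \<xi>'(1)] BB' j quat_subgroup_nonzero[OF K] by blast
    moreover have "\<xi> j * inverse (\<xi>' j) = s"
      using const[OF j] BB' j unfolding v_def block_vector_def by auto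
    ultimately have "\<xi> j = s * \<xi>' j"
      by (metis mult.assoc left_inverse mult_1_right)
    then show ?thesis
      using s(2) by (simp flip: mult.assoc)
  qed
  then have "\<forall>\<eta>\<in>C'. restr B \<eta> \<in> C"
    unfolding \<xi>(2) \<xi>'(2) using restr_in_kclass[OF K \<xi>(1) quat_subgroup_inverse[OF K s(1)]] by blast
  then show ?thesis
    using BB' by blast
qed

lemma dowling_flat_subset_imp_le:
  assumes K: "quat_subgroup K" and \<pi>: "\<pi> \<in> dowling n K" and \<pi>': "\<pi>' \<in> dowling n K"
    and sub: "dowling_flat n \<pi>' \<subseteq> dowling_flat n \<pi>"
  shows "dowling_le \<pi> \<pi>'"
  unfolding dowling_le_def
proof (intro ballI, clarify)
  fix B' C' assume b': "(B', C') \<in> \<pi>'"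
  define S where "S = {b \<in> \<pi>. fst b \<inter> B' \<noteq> {}}"
  have block: "B \<subseteq> B' \<and> (\<forall>\<eta>\<in>C'. restr B \<eta> \<in> C)" if "(B, C) \<in> S" for B C
    using that dowling_flat_subset_block[OF K \<pi> \<pi>' sub b'] unfolding S_def by auto
  have "B' = \<Union>(fst ` S)"
  proof
    show "B' \<subseteq> \<Union>(fst ` S)"
      using dowling_flat_subset_support[OF K \<pi>' sub b'] unfolding S_def by fastforce
    show "\<Union>(fst ` S) \<subseteq> B'"
      using block by fastforce
  qed
  moreover have "S \<subseteq> \<pi>"
    unfolding S_def by blast
  ultimately show "\<exists>S\<subseteq>\<pi>. B' = \<Union>(fst ` S) \<and> (\<forall>(B, C)\<in>S. \<forall>\<eta>\<in>C'. restr B \<eta> \<in> C)"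
    using block by blast
qed

lemma dowling_le_support:
  assumes "dowling_le \<pi> \<pi>'"
  shows "\<Union>(fst ` \<pi>') \<subseteq> \<Union>(fst ` \<pi>)"
  using assms unfolding dowling_le_def by fastforce

lemma dowling_le_block:
  assumes \<pi>: "\<pi> \<in> dowling n K" and le: "dowling_le \<pi> \<pi>'"
    and b: "(B, C) \<in> \<pi>" and b': "(B', C') \<in> \<pi>'" and j: "j \<in> B" "j \<in> B'"
  shows "B \<subseteq> B' \<and> (\<forall>\<eta>\<in>C'. restr B \<eta> \<in> C)"
proof -
  obtain S where S: "S \<subseteq> \<pi>" "B' = \<Union>(fst ` S)" "\<forall>(B, C)\<in>S. \<forall>\<eta>\<in>C'. restr B \<eta> \<in> C"
    using bspec[OF le[unfolded dowling_le_def] b'] by auto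
  obtain B0 C0 where b0: "(B0, C0) \<in> S" "j \<in> B0"
    using S(2) j(2) by auto
  have "B0 = B" "C0 = C"
    using dowling_block_unique[OF \<pi> _ b] b0 S(1) j(1) by blast+
  then show ?thesis
    using b0 S by auto
qed

lemma dowling_le_imp_flat_subset:
  assumes K: "quat_subgroup K" and \<pi>: "\<pi> \<in> dowling n K" and \<pi>': "\<pi>' \<in> dowling n K"
    and le: "dowling_le \<pi> \<pi>'"
  shows "dowling_flat n \<pi>' \<subseteq> dowling_flat n \<pi>"
proof
  fix y assume y: "y \<in> dowling_flat n \<pi>'"
  show "y \<in> dowling_flat n \<pi>"
  proof (rule dowling_flatI)
    show "y \<in> qvecs n"
      using dowling_flatD(1)[OF y] .
    show "y i = 0" if "i < n" "i \<notin> \<Union>(fst ` \<pi>)" for i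
    proof (rule dowling_flatD(2)[OF y that(1)])
      show "i \<notin> \<Union>(fst ` \<pi>')"
        using that(2) dowling_le_support[OF le] by blast
    qed
    show "\<xi> i * y i = \<xi> j * y j" if b: "(B, C) \<in> \<pi>" "\<xi> \<in> C" "i \<in> B" "j \<in> B" for B C \<xi> i j
    proof (cases "\<exists>B' C'. (B', C') \<in> \<pi>' \<and> B \<inter> B' \<noteq> {}")
      case True
      then obtain B' C' where b': "(B', C') \<in> \<pi>'" "B \<inter> B' \<noteq> {}"
        by blast
      then have "B \<subseteq> B'" and restr: "\<forall>\<eta>\<in>C'. restr B \<eta> \<in> C"
        using dowling_le_block[OF \<pi> le b(1) b'(1)] by blast+
      obtain \<xi>' where \<xi>': "\<xi>' \<in> kfuns K B'" "C' = kclass K \<xi>'"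
        using dowling_blockD(3)[OF \<pi>' b'(1)] by blast
      obtain \<xi>0 where "C = kclass K \<xi>0"
        using dowling_blockD(3)[OF \<pi> b(1)] by blast
      moreover have "restr B \<xi>' \<in> C"
        using restr kclass_refl[OF K] \<xi>'(2) by blast
      ultimately obtain g where g: "\<xi> = (\<lambda>l. g * restr B \<xi>' l)"
        using kclass_left_multiple[OF K] b(2) by blast
      have "\<xi>' i * y i = \<xi>' j * y j"
        using dowling_flatD(3)[OF y b'(1) kclass_refl[OF K, of \<xi>', folded \<xi>'(2)]] b(3,4) \<open>B \<subseteq> B'\<close>
        by blast
      then show ?thesis
        using g b(3,4) unfolding restr_def by (simp add: mult.assoc)
    next
      case False
      then have "i \<notin> \<Union>(fst ` \<pi>')" "j \<notin> \<Union>(fst ` \<pi>')"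
        using b(3,4) by fastforce+
      moreover have "i < n" "j < n"
        using dowling_blockD(2)[OF \<pi> b(1)] b(3,4) by auto
      ultimately show ?thesis
        using dowling_flatD(2)[OF y] by simp
    qed
  qed
qed

lemma dowling_flat_subset_iff:
  assumes "quat_subgroup K" "\<pi> \<in> dowling n K" "\<pi>' \<in> dowling n K"
  shows "dowling_flat n \<pi>' \<subseteq> dowling_flat n \<pi> \<longleftrightarrow> dowling_le \<pi> \<pi>'"
  using dowling_flat_subset_imp_le[OF assms] dowling_le_imp_flat_subset[OF assms] by blast

lemma inj_on_dowling_flat:
  assumes K: "quat_subgroup K"
  shows "inj_on (dowling_flat n) (dowling n K)"
proof -
  have "\<pi>1 \<subseteq> \<pi>2"
    if p1: "\<pi>1 \<in> dowling n K" and p2: "\<pi>2 \<in> dowling n K"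
      and eq: "dowling_flat n \<pi>1 = dowling_flat n \<pi>2" for \<pi>1 \<pi>2
  proof clarify
    fix B C assume b1: "(B, C) \<in> \<pi>1"
    obtain i where i: "i \<in> B"
      using dowling_blockD(1)[OF p1 b1] by blast
    have "B \<subseteq> \<Union>(fst ` \<pi>2)"
      using dowling_flat_subset_support[OF K p1 _ b1, of \<pi>2] eq by simp
    then obtain B' C' where b2: "(B', C') \<in> \<pi>2" "i \<in> B'"
      using i by auto
    have le: "B' \<subseteq> B" "\<forall>\<xi>\<in>C. restr B' \<xi> \<in> C'"
      using dowling_flat_subset_block[OF K p2 p1 _ b1 b2(1) b2(2) i] eq by simp_all
    have ge: "B \<subseteq> B'"
      using dowling_flat_subset_block[OF K p1 p2 _ b2(1) b1 i b2(2)] eq by simp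
    obtain \<xi> where \<xi>: "\<xi> \<in> kfuns K B" "C = kclass K \<xi>"
      using dowling_blockD(3)[OF p1 b1] by blast
    have "restr B' \<xi> = \<xi>"
      using kfunsD(2)[OF \<xi>(1)] le(1) ge unfolding restr_def by auto
    then have "\<xi> \<in> C'"
      using le(2) \<xi>(2) kclass_refl[OF K] by metis
    moreover obtain \<xi>' where "C' = kclass K \<xi>'"
      using dowling_blockD(3)[OF p2 b2(1)] by blast
    ultimately have "C = C'"
      using kclass_eq[OF K] \<xi>(2) by blast
    then show "(B, C) \<in> \<pi>2"
      using b2 le ge by auto
  qed
  then show ?thesis
    by (intro inj_onI) blast
qed

subsection \<open>The flat spanned by a set of vectors\<close>

definition proportional :: "quat set \<Rightarrow> (nat \<Rightarrow> quat) set \<Rightarrow> nat \<Rightarrow> nat \<Rightarrow> bool" where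
  "proportional K X i j \<longleftrightarrow> (\<exists>a\<in>K. \<forall>x\<in>X. x j = a * x i)"

definition prop_block :: "nat \<Rightarrow> quat set \<Rightarrow> (nat \<Rightarrow> quat) set \<Rightarrow> nat \<Rightarrow> nat set" where
  "prop_block n K X i = {j. j < n \<and> proportional K X i j}"

definition zero_coords :: "nat \<Rightarrow> (nat \<Rightarrow> quat) set \<Rightarrow> nat set" where
  "zero_coords n X = {i. i < n \<and> (\<forall>x\<in>X. x i = 0)}"

definition prop_coeff :: "quat set \<Rightarrow> (nat \<Rightarrow> quat) set \<Rightarrow> nat \<Rightarrow> nat \<Rightarrow> quat" where
  "prop_coeff K X i j = (SOME a. a \<in> K \<and> (\<forall>x\<in>X. x j = a * x i))"

definition block_class :: "nat \<Rightarrow> quat set \<Rightarrow> (nat \<Rightarrow> quat) set \<Rightarrow> nat \<Rightarrow> nat \<Rightarrow> quat" where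
  "block_class n K X i = (\<lambda>j. if j \<in> prop_block n K X i then inverse (prop_coeff K X i j) else 0)"

text \<open>Each block is listed once, through its least element; the flat of this partition is the
  smallest flat containing X.\<close>

definition dowling_hull :: "nat \<Rightarrow> quat set \<Rightarrow> (nat \<Rightarrow> quat) set \<Rightarrow> (nat set \<times> (nat \<Rightarrow> quat) set) set" where
  "dowling_hull n K X = {(prop_block n K X i, kclass K (block_class n K X i)) | i.
     i < n \<and> i \<notin> zero_coords n X \<and> Min (prop_block n K X i) = i}"

context
  fixes n :: nat and K :: "quat set" and X :: "(nat \<Rightarrow> quat) set"
  assumes K: "quat_subgroup K"
begin

lemma proportional_refl: "proportional K X i i"
  unfolding proportional_def using quat_subgroup_one[OF K] by force

lemma proportional_sym: "proportional K X i j \<Longrightarrow> proportional K X j i"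
proof -
  assume "proportional K X i j"
  then obtain a where a: "a \<in> K" "\<forall>x\<in>X. x j = a * x i"
    unfolding proportional_def by blast
  have "\<forall>x\<in>X. x i = inverse a * x j"
    using a quat_subgroup_nonzero[OF K a(1)] by (auto simp flip: mult.assoc)
  then show "proportional K X j i"
    unfolding proportional_def using quat_subgroup_inverse[OF K a(1)] by blast
qed

lemma proportional_trans: "proportional K X i j \<Longrightarrow> proportional K X j l \<Longrightarrow> proportional K X i l"
proof -
  assume "proportional K X i j" "proportional K X j l"
  then obtain a b where "a \<in> K" "\<forall>x\<in>X. x j = a * x i" "b \<in> K" "\<forall>x\<in>X. x l = b * x j"
    unfolding proportional_def by blast
  then show "proportional K X i l"
    unfolding proportional_def using quat_subgroup_mult[OF K]
    by (intro bexI[of _ "b * a"]) (simp_all add: mult.assoc)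
qed

lemma prop_block_self: "i < n \<Longrightarrow> i \<in> prop_block n K X i"
  unfolding prop_block_def using proportional_refl by simp

lemma prop_block_eq: "j \<in> prop_block n K X i \<Longrightarrow> prop_block n K X j = prop_block n K X i"
  unfolding prop_block_def using proportional_sym proportional_trans by blast

lemma prop_block_subset: "prop_block n K X i \<subseteq> {..<n}"
  unfolding prop_block_def by auto

lemma finite_prop_block: "finite (prop_block n K X i)"
  using finite_subset[OF prop_block_subset] by simp

lemma prop_block_zero_coords:
  assumes "j \<in> prop_block n K X i" "i \<notin> zero_coords n X" "i < n"
  shows "j \<notin> zero_coords n X"
proof
  assume j: "j \<in> zero_coords n X"
  obtain a where a: "a \<in> K" "\<forall>x\<in>X. x j = a * x i"
    using assms(1) unfolding prop_block_def proportional_def by blast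
  have "\<forall>x\<in>X. x i = 0"
    using a j quat_subgroup_nonzero[OF K a(1)] unfolding zero_coords_def by force
  then show False
    using assms(2,3) unfolding zero_coords_def by simp
qed

lemma prop_coeff:
  assumes "j \<in> prop_block n K X i"
  shows prop_coeff_in: "prop_coeff K X i j \<in> K"
    and prop_coeff_mult: "x \<in> X \<Longrightarrow> x j = prop_coeff K X i j * x i"
proof -
  have "\<exists>a. a \<in> K \<and> (\<forall>x\<in>X. x j = a * x i)"
    using assms unfolding prop_block_def proportional_def by blast
  then have "prop_coeff K X i j \<in> K \<and> (\<forall>x\<in>X. x j = prop_coeff K X i j * x i)"
    unfolding prop_coeff_def by (rule someI_ex)
  then show "prop_coeff K X i j \<in> K" "x \<in> X \<Longrightarrow> x j = prop_coeff K X i j * x i"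
    by blast+
qed

lemma prop_coeff_unique:
  assumes "i \<notin> zero_coords n X" "i < n" "j \<in> prop_block n K X i" "\<forall>x\<in>X. x j = a * x i"
  shows "prop_coeff K X i j = a"
proof -
  obtain x where x: "x \<in> X" "x i \<noteq> 0"
    using assms(1,2) unfolding zero_coords_def by blast
  moreover have "x j = prop_coeff K X i j * x i" "x j = a * x i"
    using prop_coeff_mult[OF assms(3) x(1)] assms(4) x(1) by auto
  ultimately show ?thesis
    by simp
qed

lemma block_class_mult: "j \<in> prop_block n K X i \<Longrightarrow> x \<in> X \<Longrightarrow> block_class n K X i j * x j = x i"
  using prop_coeff_in[of j i] prop_coeff_mult[of j i x] quat_subgroup_nonzero[OF K]
  by (auto simp: block_class_def simp flip: mult.assoc)

lemma dowling_hull_block: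
  assumes "i < n" "i \<notin> zero_coords n X"
  defines "r \<equiv> Min (prop_block n K X i)"
  shows "(prop_block n K X i, kclass K (block_class n K X r)) \<in> dowling_hull n K X"
    and "prop_block n K X r = prop_block n K X i"
    and "r \<in> prop_block n K X i" "r < n" "r \<notin> zero_coords n X"
proof -
  show r: "r \<in> prop_block n K X i"
    unfolding r_def using Min_in[OF finite_prop_block] prop_block_self[OF assms(1)] by blast
  show br: "prop_block n K X r = prop_block n K X i"
    using prop_block_eq[OF r] .
  show "r < n" "r \<notin> zero_coords n X"
    using r prop_block_subset prop_block_zero_coords[OF r assms(2,1)] by auto
  moreover have "Min (prop_block n K X r) = r"
    using br by (simp add: r_def)
  ultimately show "(prop_block n K X i, kclass K (block_class n K X r)) \<in> dowling_hull n K X"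
    unfolding dowling_hull_def using br by (intro CollectI exI[of _ r]) simp
qed

lemma dowling_hullE:
  assumes "(B, C) \<in> dowling_hull n K X"
  obtains i where "i < n" "i \<notin> zero_coords n X"
    "B = prop_block n K X i" "C = kclass K (block_class n K X i)"
  using assms unfolding dowling_hull_def by blast

lemma dowling_hull_in_dowling: "dowling_hull n K X \<in> dowling n K"
proof -
  have blocks: "B \<noteq> {} \<and> B \<subseteq> {..<n} \<and> (\<exists>\<xi>\<in>kfuns K B. C = kclass K \<xi>)"
    if bc: "(B, C) \<in> dowling_hull n K X" for B C
  proof -
    obtain i where i: "i < n" "i \<notin> zero_coords n X"
      "B = prop_block n K X i" "C = kclass K (block_class n K X i)"
      using bc by (rule dowling_hullE)
    have "block_class n K X i \<in> kfuns K B"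
      unfolding kfuns_def block_class_def i(3)
      using prop_coeff_in[of _ i] quat_subgroup_inverse[OF K] by simp
    moreover have "B \<noteq> {}" "B \<subseteq> {..<n}"
      using prop_block_self[OF i(1)] prop_block_subset[of i] i(3) by auto
    ultimately show ?thesis
      using i(4) by blast
  qed
  have disjoint: "fst b1 \<inter> fst b2 = {}"
    if b: "b1 \<in> dowling_hull n K X" "b2 \<in> dowling_hull n K X" "b1 \<noteq> b2" for b1 b2
  proof -
    obtain i1 where i1: "Min (prop_block n K X i1) = i1"
      "b1 = (prop_block n K X i1, kclass K (block_class n K X i1))"
      using b(1) unfolding dowling_hull_def by blast
    obtain i2 where i2: "Min (prop_block n K X i2) = i2"
      "b2 = (prop_block n K X i2, kclass K (block_class n K X i2))"
      using b(2) unfolding dowling_hull_def by blast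
    show ?thesis
    proof (rule ccontr)
      assume "fst b1 \<inter> fst b2 \<noteq> {}"
      then obtain j where "j \<in> prop_block n K X i1" "j \<in> prop_block n K X i2"
        using i1(2) i2(2) by auto
      then have "prop_block n K X i1 = prop_block n K X i2"
        using prop_block_eq by blast
      then have "i1 = i2"
        using i1(1) i2(1) by metis
      then show False
        using b(3) i1(2) i2(2) by simp
    qed
  qed
  show ?thesis
    unfolding dowling_def using blocks disjoint by (intro CollectI conjI) blast+
qed

lemma dowling_hull_support: "i < n \<Longrightarrow> i \<in> \<Union>(fst ` dowling_hull n K X) \<longleftrightarrow> i \<notin> zero_coords n X"
proof
  assume "i \<in> \<Union>(fst ` dowling_hull n K X)"
  then obtain B C where "(B, C) \<in> dowling_hull n K X" "i \<in> B"
    by auto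
  then obtain r where "r < n" "r \<notin> zero_coords n X" "i \<in> prop_block n K X r"
    by (metis dowling_hullE)
  then show "i \<notin> zero_coords n X"
    using prop_block_zero_coords by blast
next
  assume "i < n" "i \<notin> zero_coords n X"
  then show "i \<in> \<Union>(fst ` dowling_hull n K X)"
    using dowling_hull_block(1) prop_block_self by force
qed

lemma subset_dowling_flat_hull:
  assumes X: "X \<subseteq> qvecs n"
  shows "X \<subseteq> dowling_flat n (dowling_hull n K X)"
proof
  fix x assume x: "x \<in> X"
  show "x \<in> dowling_flat n (dowling_hull n K X)"
  proof (rule dowling_flatI)
    show "x \<in> qvecs n"
      using X x by blast
    show "x i = 0" if "i < n" "i \<notin> \<Union>(fst ` dowling_hull n K X)" for i
      using that dowling_hull_support x unfolding zero_coords_def by blast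
    show "\<xi> i * x i = \<xi> j * x j"
      if b: "(B, C) \<in> dowling_hull n K X" "\<xi> \<in> C" "i \<in> B" "j \<in> B" for B C \<xi> i j
    proof -
      obtain r where r: "r < n" "r \<notin> zero_coords n X"
        "B = prop_block n K X r" "C = kclass K (block_class n K X r)"
        using b(1) by (rule dowling_hullE)
      obtain g where "\<xi> = (\<lambda>l. g * block_class n K X r l)"
        using b(2) r(4) unfolding kclass_def by blast
      then show ?thesis
        using block_class_mult[OF _ x] b(3,4) r(3) by (simp add: mult.assoc)
    qed
  qed
qed

lemma dowling_flat_hull_proportional:
  assumes "i < n" "j < n" "a \<in> K" "\<forall>x\<in>X. x j = a * x i"
    and y: "y \<in> dowling_flat n (dowling_hull n K X)"
  shows "y j = a * y i"
proof (cases "i \<in> zero_coords n X")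
  case True
  then have "j \<in> zero_coords n X"
    using assms(2,4) unfolding zero_coords_def by auto
  then have "y i = 0" "y j = 0"
    using True dowling_flatD(2)[OF y] dowling_hull_support[OF assms(1)] dowling_hull_support[OF assms(2)]
      assms(1,2) by simp_all
  then show ?thesis
    by simp
next
  case False
  have j: "j \<in> prop_block n K X i"
    unfolding prop_block_def proportional_def using assms by blast
  define r where "r = Min (prop_block n K X i)"
  have hull: "(prop_block n K X i, kclass K (block_class n K X r)) \<in> dowling_hull n K X"
    and br: "prop_block n K X r = prop_block n K X i" and r: "r < n" "r \<notin> zero_coords n X"
    using dowling_hull_block[OF assms(1) False] unfolding r_def by auto
  have ir: "i \<in> prop_block n K X r" "j \<in> prop_block n K X r"
    using br prop_block_self[OF assms(1)] j by auto
  have "\<forall>x\<in>X. x j = (a * prop_coeff K X r i) * x r"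
    using prop_coeff_mult[OF ir(1)] assms(4) by (simp add: mult.assoc)
  then have cj: "prop_coeff K X r j = a * prop_coeff K X r i"
    by (rule prop_coeff_unique[OF r(2,1) ir(2)])
  have "block_class n K X r i * y i = block_class n K X r j * y j"
    using dowling_flatD(3)[OF y hull kclass_refl[OF K] prop_block_self[OF assms(1)] j] .
  moreover have ci: "prop_coeff K X r i \<noteq> 0" and a: "a \<noteq> 0"
    using prop_coeff_in[OF ir(1)] quat_subgroup_nonzero[OF K] assms(3) by auto
  ultimately have "inverse (prop_coeff K X r i) * y i = inverse (prop_coeff K X r i) * (inverse a * y j)"
    using ir cj unfolding block_class_def by (simp add: nonzero_inverse_mult_distrib mult.assoc)
  then have "y i = inverse a * y j"
    using ci by simp
  then show ?thesis
    using a by (simp flip: mult.assoc)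
qed

end

lemma monomial_fixes_dowling_flat_hull:
  assumes K: "quat_subgroup K" and g: "is_monomial n K g" and X: "X \<subseteq> qvecs n"
    and fixed: "\<forall>x\<in>X. mvec n g x = x" and y: "y \<in> dowling_flat n (dowling_hull n K X)"
  shows "mvec n g y = y"
proof -
  obtain p c where p: "p permutes {..<n}" and c: "\<forall>l<n. c l \<in> K" and g_eq: "g = monomial n p c"
    using g unfolding is_monomial_def by blast
  have "y (p m) = c m * y m" if m: "m < n" for m
  proof (rule dowling_flat_hull_proportional[OF K m _ _ _ y])
    show "p m < n"
      using permutes_less_iff[OF p] m by simp
    show "c m \<in> K"
      using c m by simp
    show "\<forall>x\<in>X. x (p m) = c m * x m"
      using fixed X m mvec_monomial_fixes_iff[OF p] unfolding g_eq by blast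
  qed
  then show ?thesis
    unfolding g_eq using mvec_monomial_fixes_iff[OF p dowling_flatD(1)[OF y]] by blast
qed

lemma pointwise_stab_dowling_flat_hull:
  assumes K: "quat_subgroup K" and X: "X \<subseteq> qvecs n"
  shows "pointwise_stab n (Gn n K H) (dowling_flat n (dowling_hull n K X)) = pointwise_stab n (Gn n K H) X"
proof
  show "pointwise_stab n (Gn n K H) (dowling_flat n (dowling_hull n K X)) \<subseteq> pointwise_stab n (Gn n K H) X"
    using subset_dowling_flat_hull[OF K X] unfolding pointwise_stab_def by blast
  show "pointwise_stab n (Gn n K H) X \<subseteq> pointwise_stab n (Gn n K H) (dowling_flat n (dowling_hull n K X))"
    using monomial_fixes_dowling_flat_hull[OF K Gn_is_monomial[OF K] X]
    unfolding pointwise_stab_def by blast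
qed

lemma parabolics_Gn:
  assumes K: "quat_subgroup K"
  shows "parabolics n (Gn n K H) = (\<lambda>\<pi>. pointwise_stab n (Gn n K H) (dowling_flat n \<pi>)) ` dowling n K"
proof
  show "parabolics n (Gn n K H) \<subseteq> (\<lambda>\<pi>. pointwise_stab n (Gn n K H) (dowling_flat n \<pi>)) ` dowling n K"
  proof
    fix P assume "P \<in> parabolics n (Gn n K H)"
    then obtain X where "X \<subseteq> qvecs n" "P = pointwise_stab n (Gn n K H) X"
      unfolding parabolics_def by blast
    then have "P = pointwise_stab n (Gn n K H) (dowling_flat n (dowling_hull n K X))"
      by (simp add: pointwise_stab_dowling_flat_hull[OF K])
    then show "P \<in> (\<lambda>\<pi>. pointwise_stab n (Gn n K H) (dowling_flat n \<pi>)) ` dowling n K"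
      by (rule image_eqI) (rule dowling_hull_in_dowling[OF K])
  qed
  show "(\<lambda>\<pi>. pointwise_stab n (Gn n K H) (dowling_flat n \<pi>)) ` dowling n K \<subseteq> parabolics n (Gn n K H)"
    unfolding parabolics_def using dowling_flatD(1) by blast
qed

subsection \<open>Separating flats by reflecting hyperplanes\<close>

definition separated_by_reflections :: "nat \<Rightarrow> (nat \<Rightarrow> nat \<Rightarrow> quat) set \<Rightarrow> (nat \<Rightarrow> quat) set \<Rightarrow> bool" where
  "separated_by_reflections n G V \<longleftrightarrow>
     (\<forall>x\<in>qvecs n - V. \<exists>g. is_reflection n G g \<and> V \<subseteq> fixspace n g \<and> x \<notin> fixspace n g)"

lemma pointwise_stab_subset_iff:
  assumes sep: "separated_by_reflections n G V" and W: "W \<subseteq> qvecs n"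
  shows "pointwise_stab n G V \<subseteq> pointwise_stab n G W \<longleftrightarrow> W \<subseteq> V"
proof
  assume sub: "pointwise_stab n G V \<subseteq> pointwise_stab n G W"
  show "W \<subseteq> V"
  proof
    fix y assume y: "y \<in> W"
    show "y \<in> V"
    proof (rule ccontr)
      assume "y \<notin> V"
      then obtain g where g: "is_reflection n G g" "V \<subseteq> fixspace n g" "y \<notin> fixspace n g"
        using sep W y unfolding separated_by_reflections_def by blast
      then have "g \<in> pointwise_stab n G V"
        unfolding pointwise_stab_def fixspace_def is_reflection_def by blast
      then have "mvec n g y = y"
        using sub y unfolding pointwise_stab_def by blast
      then show False
        using g(3) W y unfolding fixspace_def by blast
    qed
  qed
next
  assume "W \<subseteq> V"
  then show "pointwise_stab n G V \<subseteq> pointwise_stab n G W"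
    unfolding pointwise_stab_def by blast
qed

lemma separated_in_intersection_lattice:
  assumes sep: "separated_by_reflections n G V" and V: "V \<subseteq> qvecs n"
  shows "V \<in> intersection_lattice n G"
proof -
  define S where "S = {fixspace n g | g. is_reflection n G g \<and> V \<subseteq> fixspace n g}"
  have "S \<subseteq> arrangement n G"
    unfolding S_def arrangement_def by blast
  moreover have "V = qvecs n \<inter> \<Inter>S"
  proof
    show "V \<subseteq> qvecs n \<inter> \<Inter>S"
      using V unfolding S_def by blast
    show "qvecs n \<inter> \<Inter>S \<subseteq> V"
    proof
      fix x assume x: "x \<in> qvecs n \<inter> \<Inter>S"
      show "x \<in> V"
      proof (rule ccontr)
        assume "x \<notin> V"
        then obtain g where g: "is_reflection n G g" "V \<subseteq> fixspace n g" "x \<notin> fixspace n g"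
          using sep x unfolding separated_by_reflections_def by blast
        then have "fixspace n g \<in> S"
          unfolding S_def by blast
        then show False
          using x g(3) by blast
      qed
    qed
  qed
  ultimately show ?thesis
    unfolding intersection_lattice_def by (intro CollectI exI[of _ S]) simp
qed

lemma intersection_lattice_stab_subset_imp_subset:
  assumes Y: "Y \<in> intersection_lattice n G" and W: "W \<subseteq> qvecs n"
    and stab: "pointwise_stab n G Y \<subseteq> pointwise_stab n G W"
  shows "W \<subseteq> Y"
proof
  fix w assume w: "w \<in> W"
  obtain S where S: "S \<subseteq> arrangement n G" "Y = qvecs n \<inter> \<Inter>S"
    using Y unfolding intersection_lattice_def by blast
  have "w \<in> F" if F: "F \<in> S" for F
  proof -
    obtain g where g: "F = fixspace n g" "is_reflection n G g"
      using S(1) F unfolding arrangement_def by blast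
    then have "g \<in> pointwise_stab n G Y"
      using S(2) F unfolding pointwise_stab_def fixspace_def is_reflection_def by blast
    then have "mvec n g w = w"
      using stab w unfolding pointwise_stab_def by blast
    then show ?thesis
      using g(1) W w unfolding fixspace_def by blast
  qed
  then show "w \<in> Y"
    using S(2) W w by blast
qed

lemma not_in_dowling_flatE:
  assumes "x \<in> qvecs n" "x \<notin> dowling_flat n \<pi>"
  obtains (zero) i where "i < n" "i \<notin> \<Union>(fst ` \<pi>)" "x i \<noteq> 0"
  | (block) B C \<xi> i j where "(B, C) \<in> \<pi>" "\<xi> \<in> C" "i \<in> B" "j \<in> B" "\<xi> i * x i \<noteq> \<xi> j * x j"
proof (cases "\<exists>i<n. i \<notin> \<Union>(fst ` \<pi>) \<and> x i \<noteq> 0")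
  case True
  then show ?thesis
    using zero by blast
next
  case False
  have "\<not> (\<forall>B C \<xi> i j. (B, C) \<in> \<pi> \<longrightarrow> \<xi> \<in> C \<longrightarrow> i \<in> B \<longrightarrow> j \<in> B \<longrightarrow> \<xi> i * x i = \<xi> j * x j)"
  proof
    assume blocks: "\<forall>B C \<xi> i j. (B, C) \<in> \<pi> \<longrightarrow> \<xi> \<in> C \<longrightarrow> i \<in> B \<longrightarrow> j \<in> B \<longrightarrow> \<xi> i * x i = \<xi> j * x j"
    have "x \<in> dowling_flat n \<pi>"
    proof (rule dowling_flatI[OF assms(1)])
      show "x i = 0" if "i < n" "i \<notin> \<Union>(fst ` \<pi>)" for i
        using False that by blast
    qed (use blocks in blast)
    then show False
      using assms(2) by contradiction
  qed
  then show ?thesis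
    using block by blast
qed

lemma diag_reflection_separates:
  assumes "h \<noteq> 1" "i < n" "i \<notin> \<Union>(fst ` \<pi>)" "x i \<noteq> 0"
  shows "dowling_flat n \<pi> \<subseteq> fixspace n (diag_reflection n h i)"
    and "x \<notin> fixspace n (diag_reflection n h i)"
proof
  fix y assume y: "y \<in> dowling_flat n \<pi>"
  then show "y \<in> fixspace n (diag_reflection n h i)"
    unfolding fixspace_diag_reflection[OF assms(1,2)]
    using dowling_flatD(1)[OF y] dowling_flatD(2)[OF y assms(2,3)] by simp
next
  show "x \<notin> fixspace n (diag_reflection n h i)"
    unfolding fixspace_diag_reflection[OF assms(1,2)] using assms(4) by simp
qed

lemma transp_reflection_separates:
  assumes K: "quat_subgroup K" and H: "quat_subgroup H" and \<pi>: "\<pi> \<in> dowling n K"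
    and b: "(B, C) \<in> \<pi>" "\<xi> \<in> C" "i \<in> B" "j \<in> B" and neq: "\<xi> i * x i \<noteq> \<xi> j * x j"
  defines "g \<equiv> transp_reflection n (inverse (\<xi> i) * \<xi> j) i j"
  shows "is_reflection n (Gn n K H) g \<and> dowling_flat n \<pi> \<subseteq> fixspace n g \<and> x \<notin> fixspace n g"
proof -
  define a where "a = inverse (\<xi> i) * \<xi> j"
  have ij: "i < n" "j < n" "i \<noteq> j"
    using dowling_blockD(2)[OF \<pi> b(1)] b(3,4) neq by auto
  have \<xi>K: "\<xi> i \<in> K" "\<xi> j \<in> K"
    using dowling_class_values[OF K \<pi> b(1,2)] b(3,4) by auto
  then have \<xi>i: "\<xi> i \<noteq> 0"
    using quat_subgroup_nonzero[OF K] by blast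
  have a: "a \<in> K"
    unfolding a_def using \<xi>K quat_subgroup_mult[OF K] quat_subgroup_inverse[OF K] by blast
  have balance: "\<xi> i * v i = \<xi> j * v j \<longleftrightarrow> v i = a * v j" for v
  proof -
    have "\<xi> i * (a * v j) = \<xi> j * v j"
      unfolding a_def using \<xi>i by (simp flip: mult.assoc)
    then have "\<xi> i * v i = \<xi> j * v j \<longleftrightarrow> \<xi> i * v i = \<xi> i * (a * v j)"
      by simp
    also have "\<dots> \<longleftrightarrow> v i = a * v j"
      using \<xi>i by simp
    finally show ?thesis .
  qed
  have fix_eq: "fixspace n g = {v \<in> qvecs n. v i = a * v j}"
    unfolding g_def a_def[symmetric] using fixspace_transp_reflection[OF quat_subgroup_nonzero[OF K a] ij] .
  have "dowling_flat n \<pi> \<subseteq> fixspace n g"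
  proof
    fix y assume y: "y \<in> dowling_flat n \<pi>"
    then have "\<xi> i * y i = \<xi> j * y j"
      by (rule dowling_flatD(3)[OF _ b])
    then show "y \<in> fixspace n g"
      unfolding fix_eq using balance dowling_flatD(1)[OF y] by simp
  qed
  moreover have "x \<notin> fixspace n g"
    unfolding fix_eq using neq balance by simp
  moreover have "is_reflection n (Gn n K H) g"
    unfolding g_def a_def[symmetric] using is_reflection_transp_reflection[OF K H a ij] .
  ultimately show ?thesis
    by blast
qed

lemma dowling_flat_separated_by_reflections:
  assumes K: "quat_subgroup K" "finite K" and H: "quat_subgroup H" "H \<subseteq> K"
    and h: "h \<in> H" "h \<noteq> 1" and \<pi>: "\<pi> \<in> dowling n K"
  shows "separated_by_reflections n (Gn n K H) (dowling_flat n \<pi>)"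
  unfolding separated_by_reflections_def
proof
  fix x assume "x \<in> qvecs n - dowling_flat n \<pi>"
  then show "\<exists>g. is_reflection n (Gn n K H) g \<and> dowling_flat n \<pi> \<subseteq> fixspace n g \<and> x \<notin> fixspace n g"
  proof (elim DiffE not_in_dowling_flatE)
    fix i assume i: "i < n" "i \<notin> \<Union>(fst ` \<pi>)" "x i \<noteq> 0"
    show ?thesis
      using is_reflection_diag_reflection[OF K H(2) h i(1)] diag_reflection_separates[where x = x, OF h(2) i] by blast
  next
    fix B C \<xi> i j
    assume "(B, C) \<in> \<pi>" "\<xi> \<in> C" "i \<in> B" "j \<in> B" "\<xi> i * x i \<noteq> \<xi> j * x j"
    then show ?thesis
      using transp_reflection_separates[OF K(1) H(1) \<pi>] by blast
  qed
qed

lemma intersection_lattice_Gn: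
  assumes K: "quat_subgroup K" "finite K" and H: "quat_subgroup H" "H \<subseteq> K"
    and h: "h \<in> H" "h \<noteq> 1"
  shows "intersection_lattice n (Gn n K H) = dowling_flat n ` dowling n K"
proof
  show "intersection_lattice n (Gn n K H) \<subseteq> dowling_flat n ` dowling n K"
  proof
    fix Y assume Y: "Y \<in> intersection_lattice n (Gn n K H)"
    then have Yq: "Y \<subseteq> qvecs n"
      unfolding intersection_lattice_def by blast
    have "dowling_flat n (dowling_hull n K Y) \<subseteq> Y"
      by (rule intersection_lattice_stab_subset_imp_subset[OF Y])
        (auto dest: dowling_flatD(1) simp: pointwise_stab_dowling_flat_hull[OF K(1) Yq])
    then have "Y = dowling_flat n (dowling_hull n K Y)"
      by (rule subset_antisym[OF subset_dowling_flat_hull[OF K(1) Yq]])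
    then show "Y \<in> dowling_flat n ` dowling n K"
      by (rule image_eqI) (rule dowling_hull_in_dowling[OF K(1)])
  qed
  show "dowling_flat n ` dowling n K \<subseteq> intersection_lattice n (Gn n K H)"
  proof (rule image_subsetI)
    fix \<pi> assume "\<pi> \<in> dowling n K"
    then show "dowling_flat n \<pi> \<in> intersection_lattice n (Gn n K H)"
      by (rule separated_in_intersection_lattice[OF dowling_flat_separated_by_reflections[OF K H h]])
        (auto dest: dowling_flatD(1))
  qed
qed

lemma poset_isoI:
  "bij_betw f X Y \<Longrightarrow> (\<And>x y. x \<in> X \<Longrightarrow> y \<in> X \<Longrightarrow> le x y \<longleftrightarrow> le' (f x) (f y)) \<Longrightarrow> poset_iso X le Y le'"
  unfolding poset_iso_def by blast

lemma poset_iso_sym: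
  assumes "poset_iso X le Y le'"
  shows "poset_iso Y le' X le"
proof -
  obtain f where f: "bij_betw f X Y" and mono: "\<forall>x\<in>X. \<forall>y\<in>X. le x y \<longleftrightarrow> le' (f x) (f y)"
    using assms unfolding poset_iso_def by blast
  show ?thesis
  proof (rule poset_isoI[OF bij_betw_inv_into[OF f]])
    fix x y assume "x \<in> Y" "y \<in> Y"
    then show "le' x y \<longleftrightarrow> le (inv_into X f x) (inv_into X f y)"
      using mono bij_betw_inv_into_right[OF f] bij_betwE[OF bij_betw_inv_into[OF f]] by simp
  qed
qed

lemma parabolics_iso_dowling:
  assumes K: "quat_subgroup K" "finite K" and H: "quat_subgroup H" "H \<subseteq> K"
    and h: "h \<in> H" "h \<noteq> 1"
  shows "poset_iso (parabolics n (Gn n K H)) (\<subseteq>) (dowling n K) dowling_le"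
proof (rule poset_iso_sym)
  define stab where "stab \<pi> = pointwise_stab n (Gn n K H) (dowling_flat n \<pi>)" for \<pi>
  have flat_le: "dowling_flat n \<pi>' \<subseteq> dowling_flat n \<pi> \<longleftrightarrow> stab \<pi> \<subseteq> stab \<pi>'"
    if "\<pi> \<in> dowling n K" for \<pi> \<pi>'
    unfolding stab_def
    by (rule pointwise_stab_subset_iff[symmetric, OF dowling_flat_separated_by_reflections[OF K H h that]])
      (auto dest: dowling_flatD(1))
  have inj: "inj_on stab (dowling n K)"
  proof (rule inj_onI)
    fix \<pi> \<pi>' assume \<pi>: "\<pi> \<in> dowling n K" "\<pi>' \<in> dowling n K" and eq: "stab \<pi> = stab \<pi>'"
    have "dowling_flat n \<pi>' \<subseteq> dowling_flat n \<pi>" "dowling_flat n \<pi> \<subseteq> dowling_flat n \<pi>'"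
      using flat_le[OF \<pi>(1), of \<pi>'] flat_le[OF \<pi>(2), of \<pi>] eq by simp_all
    then have "dowling_flat n \<pi> = dowling_flat n \<pi>'"
      by (rule subset_antisym[rotated])
    then show "\<pi> = \<pi>'"
      using inj_onD[OF inj_on_dowling_flat[OF K(1)] _ \<pi>] by blast
  qed
  moreover have "stab ` dowling n K = parabolics n (Gn n K H)"
    unfolding parabolics_Gn[OF K(1)] stab_def ..
  ultimately have "bij_betw stab (dowling n K) (parabolics n (Gn n K H))"
    unfolding bij_betw_def ..
  then show "poset_iso (dowling n K) dowling_le (parabolics n (Gn n K H)) (\<subseteq>)"
  proof (rule poset_isoI)
    fix \<pi> \<pi>' assume \<pi>: "\<pi> \<in> dowling n K" "\<pi>' \<in> dowling n K"
    have "dowling_le \<pi> \<pi>' \<longleftrightarrow> dowling_flat n \<pi>' \<subseteq> dowling_flat n \<pi>"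
      using dowling_flat_subset_iff[OF K(1) \<pi>] by (rule sym)
    also have "\<dots> \<longleftrightarrow> stab \<pi> \<subseteq> stab \<pi>'"
      by (rule flat_le[OF \<pi>(1)])
    finally show "dowling_le \<pi> \<pi>' \<longleftrightarrow> stab \<pi> \<subseteq> stab \<pi>'" .
  qed
qed

lemma intersection_lattice_iso_dowling:
  assumes K: "quat_subgroup K" "finite K" and H: "quat_subgroup H" "H \<subseteq> K"
    and h: "h \<in> H" "h \<noteq> 1"
  shows "poset_iso (intersection_lattice n (Gn n K H)) (\<lambda>X Y. Y \<subseteq> X) (dowling n K) dowling_le"
proof (rule poset_iso_sym)
  have "bij_betw (dowling_flat n) (dowling n K) (intersection_lattice n (Gn n K H))"
    unfolding bij_betw_def intersection_lattice_Gn[OF K H h] using inj_on_dowling_flat[OF K(1)] by simp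
  then show "poset_iso (dowling n K) dowling_le (intersection_lattice n (Gn n K H)) (\<lambda>X Y. Y \<subseteq> X)"
  proof (rule poset_isoI)
    fix \<pi> \<pi>' assume "\<pi> \<in> dowling n K" "\<pi>' \<in> dowling n K"
    then show "dowling_le \<pi> \<pi>' \<longleftrightarrow> dowling_flat n \<pi>' \<subseteq> dowling_flat n \<pi>"
      by (rule dowling_flat_subset_iff[OF K(1), symmetric])
  qed
qed

theorem corollary4p6:
  fixes K H :: "quat set" and n :: nat
  assumes "finite K" and "quat_subgroup K" and "quat_subgroup H" and "H \<subseteq> K"
    and "\<forall>k\<in>K. \<forall>h\<in>H. k * h * inverse k \<in> H"
    and "\<forall>a\<in>K. \<forall>b\<in>K. a * b * inverse a * inverse b \<in> H"
    and "H \<noteq> {1}" and "n \<ge> 3"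
  shows "poset_iso (parabolics n (Gn n K H)) (\<subseteq>) (dowling n K) dowling_le
       \<and> poset_iso (intersection_lattice n (Gn n K H)) (\<lambda>X Y. Y \<subseteq> X) (dowling n K) dowling_le"
proof -
  obtain h where h: "h \<in> H" "h \<noteq> 1"
    using assms(7) quat_subgroup_one[OF assms(3)] by (auto simp: set_eq_iff)
  show ?thesis
    using parabolics_iso_dowling[OF assms(2,1,3,4) h] intersection_lattice_iso_dowling[OF assms(2,1,3,4) h]
    by (rule conjI)
qed

end
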